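(* Under the hypotheses of the hyperbolic Minkowski formula (isometric immersion $x:M\to B^{\mathbb{H}}_R$, $x(\partial M)\subset\partial B^{\mathbb{H}}_R$, constant contact angle $\theta\in(0,\pi)$), for every constant $a\in\mathbb{R}^{n+1}$, along $\partial M$: $$\bar\nabla_\mu\big(V_a+\sinh R\cos\theta\,\bar g(Y_a,\nu)\big)=q\big(V_a+\sinh R\cos\theta\,\bar g(Y_a,\nu)\big),\qquad \bar\nabla_\mu\bar g(X_a,\nu)=q\,\bar g(X_a,\nu),$$ where $q=\frac{\coth R}{\sin\theta}+\cot\theta\,h(\mu,\mu)$.
   Context: $\mathbb{H}^{n+1}=(\mathbb{B}^{n+1},\bar g=\frac{4}{(1-|x|^2)^2}\delta)$; $B^{\mathbb{H}}_R$ is the closed hyperbolic ball of radius $R$ centered at $0$, of Euclidean radius $R_{\mathbb{R}}=\tanh(R/2)$. $V_a=\frac{2\langle x,a\rangle}{1-|x|^2}$, $X_a=\frac{2}{1-R_{\mathbb{R}}^2}[\langle x,a\rangle x-\frac12(|x|^2+R_{\mathbb{R}}^2)a]$, $Y_a=\frac12(|x|^2+1)a-\langle x,a\rangle x$. $\nu$ is a unit normal, $h(X,Y)=\bar g(\bar\nabla_X\nu,Y)$; $\bar N=x/\sinh R$ the outward normal of $\partial B^{\mathbb{H}}_R$, $\mu$ the outward conormal of $\partial M$ in $M$, $\bar\nu$ the unit normal of $\partial M$ in $\partial B^{\mathbb{H}}_R$ with $\{\nu,\mu\}$, $\{\bar\nu,\bar N\}$ equally oriented; constant angle: $\mu=\sin\theta\,\bar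 N+\cos\theta\,\bar\nu$, $\nu=-\cos\theta\,\bar N+\sin\theta\,\bar\nu$. *)

theory Defs
  imports "HOL-Analysis.Analysis"
begin

text \<open>Poincare ball model of hyperbolic space: points p of a Euclidean space with
  norm p < 1, metric gbar_p(X,Y) = 4/(1-|p|^2)^2 <X,Y>.\<close>

definition gbar :: "'b::euclidean_space \<Rightarrow> 'b \<Rightarrow> 'b \<Rightarrow> real" where
  "gbar p X Y = 4 / (1 - (norm p)\<^sup>2)\<^sup>2 * (X \<bullet> Y)"

text \<open>Euclidean gradient of the conformal factor phi = ln (2/(1-|p|^2)),
  gbar = exp(2 phi) delta.\<close>
definition grad_phi :: "'b::euclidean_space \<Rightarrow> 'b" where
  "grad_phi p = (2 / (1 - (norm p)\<^sup>2)) *\<^sub>R p"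

text \<open>Levi-Civita covariant derivative of gbar of a vector field Y along a curve/map
  at the point p in direction X, where DY is the ordinary (Euclidean) derivative of Y in
  direction X:  nabla_X Y = D_X Y + X(phi) Y + Y(phi) X - <X,Y> grad phi.\<close>
definition cov_deriv :: "'b::euclidean_space \<Rightarrow> 'b \<Rightarrow> 'b \<Rightarrow> 'b \<Rightarrow> 'b" where
  "cov_deriv p X Y DY = DY + (X \<bullet> grad_phi p) *\<^sub>R Y + (Y \<bullet> grad_phi p) *\<^sub>R X
     - (X \<bullet> Y) *\<^sub>R grad_phi p"

definition V_fun :: "'b::euclidean_space \<Rightarrow> 'b \<Rightarrow> real" where
  "V_fun a p = 2 * (p \<bullet> a) / (1 - (norm p)\<^sup>2)"

definition X_fld :: "real \<Rightarrow> 'b::euclidean_space \<Rightarrow> 'b \<Rightarrow> 'b" where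
  "X_fld R a p = (2 / (1 - (tanh (R/2))\<^sup>2)) *\<^sub>R
     ((p \<bullet> a) *\<^sub>R p - (1/2 * ((norm p)\<^sup>2 + (tanh (R/2))\<^sup>2)) *\<^sub>R a)"

definition Y_fld :: "'b::euclidean_space \<Rightarrow> 'b \<Rightarrow> 'b" where
  "Y_fld a p = (1/2 * ((norm p)\<^sup>2 + 1)) *\<^sub>R a - (p \<bullet> a) *\<^sub>R p"

definition dir_deriv :: "('a::real_normed_vector \<Rightarrow> 'c::real_normed_vector) \<Rightarrow> 'a \<Rightarrow> 'a \<Rightarrow> 'c" where
  "dir_deriv f v = (\<lambda>u. frechet_derivative f (at u) v)"

fun iter_dir_deriv :: "'a::real_normed_vector list \<Rightarrow> ('a \<Rightarrow> 'c::real_normed_vector) \<Rightarrow> 'a \<Rightarrow> 'c" where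
  "iter_dir_deriv [] f = f"
| "iter_dir_deriv (v # vs) f = dir_deriv (iter_dir_deriv vs f) v"

definition smooth_on :: "'a::real_normed_vector set \<Rightarrow> ('a \<Rightarrow> 'c::real_normed_vector) \<Rightarrow> bool" where
  "smooth_on U f \<longleftrightarrow> (\<forall>vs. iter_dir_deriv vs f differentiable_on U)"

end

theory Submission
  imports Defs
begin

text \<open>
  At a boundary point the metric is \<open>L\<^sup>2\<close> times the Euclidean one, \<open>L = 2 / (1 - tanh\<^sup>2 (R/2))\<close>,
  and the contact angle condition puts the position vector into the plane of the normal and the
  conormal: \<open>x = sinh R (sin \<theta> \<mu> - cos \<theta> \<nu>)\<close>. Differentiating \<open>|x| = tanh (R/2)\<close> and
  \<open>\<langle>\<nu>, x\<rangle> = const\<close> along \<open>\<partial>M\<close>, and the normalisation of \<open>\<nu>\<close> on \<open>M\<close>, shows together with the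
  symmetry of second derivatives of \<open>x\<close> that \<open>D\<^sub>\<mu>\<nu>\<close> has no component tangent to \<open>\<partial>M\<close>:
  \<open>\<mu>\<close> is a principal direction. So \<open>D\<^sub>\<mu>\<nu>\<close> lies in the span of \<open>\<mu>\<close> and \<open>\<nu>\<close>; its \<open>\<nu>\<close>-component
  is forced by \<open>|\<nu>| = 1\<close> and its \<open>\<mu>\<close>-component is \<open>h(\<mu>, \<mu>)\<close> up to a known term. Substituting
  this into the chain rule turns both identities into polynomial identities in \<open>sin \<theta>\<close>,
  \<open>cos \<theta>\<close>, \<open>tanh (R/2)\<close> and \<open>h(\<mu>, \<mu>)\<close>.
\<close>

lemma eventually_ray_in_open:
  fixes u z :: "'a::real_normed_vector"
  assumes "open U" "u \<in> U"
  shows "\<forall>\<^sub>F s in at_right 0. u + s *\<^sub>R z \<in> U"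
proof -
  have "((\<lambda>s. u + s *\<^sub>R z) \<longlongrightarrow> u + 0 *\<^sub>R z) (at_right 0)"
    by (intro tendsto_intros)
  then show ?thesis
    using assms by (auto intro: topological_tendstoD)
qed

lemma has_derivative_zero_if_constant_on_ray:
  fixes f :: "'a::real_normed_vector \<Rightarrow> 'b::real_normed_vector"
  assumes f: "(f has_derivative f') (at u)"
    and const: "\<forall>\<^sub>F s in at_right 0. f (u + s *\<^sub>R z) = f u"
  shows "f' z = 0"
proof -
  have "((\<lambda>s. f (u + s *\<^sub>R z)) has_derivative (\<lambda>s. f' (s *\<^sub>R z))) (at 0 within {0..})"
    by (rule has_derivative_compose[OF _ has_derivative_at_withinI])
       (auto intro!: derivative_eq_intros simp: f)
  then have "((\<lambda>s. f (u + s *\<^sub>R z)) has_derivative (\<lambda>s. s *\<^sub>R f' z)) (at 0 within {0..})"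
    by (simp add: linear_cmul[OF has_derivative_linear[OF f]])
  then have "((\<lambda>s. f u) has_derivative (\<lambda>s. s *\<^sub>R f' z)) (at 0 within {0..})"
    by (rule has_derivative_transform_eventually) (use const in \<open>auto simp: at_within_Ici_at_right\<close>)
  then have "((\<lambda>s. f u) has_vector_derivative f' z) (at 0 within {0..})"
    by (simp add: has_vector_derivative_def)
  then show ?thesis
    using vector_derivative_unique_within[of 0 "{0..}" "\<lambda>_. f u" "f' z" 0]
    by (simp add: at_within_Ici_at_right)
qed

lemma has_derivative_zero_if_constant_on_halfspace:
  fixes f :: "'a::real_inner \<Rightarrow> 'b::real_normed_vector"
  assumes f: "(f has_derivative f') (at u)" and U: "open U" "u \<in> U" and u: "u \<bullet> e = 0"
    and const: "\<And>v. v \<in> U \<Longrightarrow> v \<bullet> e \<ge> 0 \<Longrightarrow> f v = f u"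
  shows "f' y = 0"
proof -
  have inward: "f' z = 0" if "z \<bullet> e \<ge> 0" for z
  proof (rule has_derivative_zero_if_constant_on_ray[OF f])
    show "\<forall>\<^sub>F s in at_right 0. f (u + s *\<^sub>R z) = f u"
      using eventually_ray_in_open[OF U, of z] eventually_at_right_less[of 0]
      by eventually_elim (use that u in \<open>auto intro!: const simp: inner_add_left\<close>)
  qed
  show ?thesis
  proof (cases "y \<bullet> e \<ge> 0")
    case False
    then have "f' (- y) = 0" by (intro inward) simp
    then show ?thesis by (simp add: linear_neg[OF has_derivative_linear[OF f]])
  qed (rule inward)
qed

lemma has_derivative_zero_if_constant_on_hyperplane:
  fixes f :: "'a::real_inner \<Rightarrow> 'b::real_normed_vector"
  assumes f: "(f has_derivative f') (at u)" and U: "open U" "u \<in> U" and u: "u \<bullet> e = 0"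
    and const: "\<And>v. v \<in> U \<Longrightarrow> v \<bullet> e = 0 \<Longrightarrow> f v = f u"
    and z: "z \<bullet> e = 0"
  shows "f' z = 0"
proof (rule has_derivative_zero_if_constant_on_ray[OF f])
  show "\<forall>\<^sub>F s in at_right 0. f (u + s *\<^sub>R z) = f u"
    using eventually_ray_in_open[OF U, of z]
    by eventually_elim (use u z in \<open>auto intro!: const simp: inner_add_left\<close>)
qed

lemma has_derivative_inner_along_line:
  fixes g :: "'a::real_normed_vector \<Rightarrow> 'b::real_inner"
  assumes "g differentiable (at (p + s *\<^sub>R y))"
  shows "((\<lambda>s. g (p + s *\<^sub>R y) \<bullet> b) has_real_derivative (dir_deriv g y (p + s *\<^sub>R y) \<bullet> b))
           (at s within S)"
proof -
  let ?g' = "frechet_derivative g (at (p + s *\<^sub>R y))"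
  have g: "(g has_derivative ?g') (at (p + s *\<^sub>R y))"
    using assms frechet_derivative_works by blast
  have line: "((\<lambda>s. p + s *\<^sub>R y) has_derivative (\<lambda>d. d *\<^sub>R y)) (at s within S)"
    by (auto intro!: derivative_eq_intros)
  have "((\<lambda>s. g (p + s *\<^sub>R y) \<bullet> b) has_derivative (\<lambda>d. ?g' (d *\<^sub>R y) \<bullet> b)) (at s within S)"
    by (rule has_derivative_inner_left) (use has_derivative_compose[OF line g] in simp)
  then show ?thesis
    by (simp add: has_field_derivative_def dir_deriv_def linear_cmul[OF has_derivative_linear[OF g]]
        mult.commute[of _ "?g' y \<bullet> b"])
qed

lemma second_difference_mean_value:
  fixes f :: "'a::real_normed_vector \<Rightarrow> 'b::real_inner"
  assumes f: "\<And>q. q \<in> U \<Longrightarrow> f differentiable (at q)"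
    and fv: "\<And>q. q \<in> U \<Longrightarrow> dir_deriv f v differentiable (at q)"
    and h: "h > 0"
    and square: "\<And>s t. 0 \<le> s \<Longrightarrow> s \<le> h \<Longrightarrow> 0 \<le> t \<Longrightarrow> t \<le> h \<Longrightarrow> u + s *\<^sub>R v + t *\<^sub>R w \<in> U"
  obtains \<xi> \<eta> where "0 < \<xi>" "\<xi> < h" "0 < \<eta>" "\<eta> < h"
    "(f (u + h *\<^sub>R v + h *\<^sub>R w) - f (u + h *\<^sub>R v) - f (u + h *\<^sub>R w) + f u) \<bullet> b
       = h * h * (dir_deriv (dir_deriv f v) w (u + \<xi> *\<^sub>R v + \<eta> *\<^sub>R w) \<bullet> b)"
proof -
  define A where "A s = f (u + h *\<^sub>R w + s *\<^sub>R v) \<bullet> b - f (u + s *\<^sub>R v) \<bullet> b" for s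
  have "DERIV A s :> dir_deriv f v (u + h *\<^sub>R w + s *\<^sub>R v) \<bullet> b - dir_deriv f v (u + s *\<^sub>R v) \<bullet> b"
    if "0 \<le> s" "s \<le> h" for s
  proof -
    have "u + h *\<^sub>R w + s *\<^sub>R v \<in> U" "u + s *\<^sub>R v \<in> U"
      using square[of s h] square[of s 0] that h by (simp_all add: add.commute add.left_commute)
    then show ?thesis
      unfolding A_def by (intro DERIV_diff has_derivative_inner_along_line f)
  qed
  from MVT2[OF h this] obtain \<xi> where \<xi>: "0 < \<xi>" "\<xi> < h" and
    A: "A h - A 0 = h * (dir_deriv f v (u + h *\<^sub>R w + \<xi> *\<^sub>R v) \<bullet> b - dir_deriv f v (u + \<xi> *\<^sub>R v) \<bullet> b)"
    by auto
  define B where "B t = dir_deriv f v (u + \<xi> *\<^sub>R v + t *\<^sub>R w) \<bullet> b" for t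
  have "DERIV B t :> dir_deriv (dir_deriv f v) w (u + \<xi> *\<^sub>R v + t *\<^sub>R w) \<bullet> b"
    if "0 \<le> t" "t \<le> h" for t
    unfolding B_def using square[of \<xi> t] that \<xi> by (intro has_derivative_inner_along_line fv) auto
  from MVT2[OF h this] obtain \<eta> where \<eta>: "0 < \<eta>" "\<eta> < h" and
    B: "B h - B 0 = h * (dir_deriv (dir_deriv f v) w (u + \<xi> *\<^sub>R v + \<eta> *\<^sub>R w) \<bullet> b)"
    by auto
  have "(f (u + h *\<^sub>R v + h *\<^sub>R w) - f (u + h *\<^sub>R v) - f (u + h *\<^sub>R w) + f u) \<bullet> b = A h - A 0"
    by (simp add: A_def inner_diff_left inner_add_left add.commute add.left_commute)
  also have "\<dots> = h * (B h - B 0)"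
    unfolding A B_def by (simp add: add.commute add.left_commute right_diff_distrib)
  finally show ?thesis
    using that[OF \<xi> \<eta>] B by simp
qed

lemma mixed_second_dir_derivs_meet_near:
  fixes f :: "'a::real_normed_vector \<Rightarrow> 'b::real_inner"
  assumes r: "r > 0"
    and f: "\<And>q. q \<in> ball u r \<Longrightarrow> f differentiable (at q)"
    and fv: "\<And>q. q \<in> ball u r \<Longrightarrow> dir_deriv f v differentiable (at q)"
    and fw: "\<And>q. q \<in> ball u r \<Longrightarrow> dir_deriv f w differentiable (at q)"
  obtains q1 q2 where "q1 \<in> ball u r" "q2 \<in> ball u r"
    "dir_deriv (dir_deriv f v) w q1 \<bullet> b = dir_deriv (dir_deriv f w) v q2 \<bullet> b"
proof -
  define h where "h = r / (norm v + norm w + 1)"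
  have vw: "norm v + norm w + 1 > 0"
    by (simp add: add_nonneg_pos)
  then have h: "h > 0"
    using r by (simp add: h_def)
  have square: "u + s *\<^sub>R v + t *\<^sub>R w \<in> ball u r"
    if "0 \<le> s" "s \<le> h" "0 \<le> t" "t \<le> h" for s t
  proof -
    have "dist u (u + s *\<^sub>R v + t *\<^sub>R w) \<le> s * norm v + t * norm w"
      using that norm_triangle_ineq[of "s *\<^sub>R v" "t *\<^sub>R w"]
      by (simp add: dist_norm norm_minus_commute add.commute)
    also have "\<dots> \<le> h * (norm v + norm w)"
      using that by (simp add: distrib_left add_mono mult_right_mono)
    also have "\<dots> < h * (norm v + norm w + 1)"
      using h by simp
    finally show ?thesis
      using vw by (simp add: h_def)
  qed
  obtain \<xi> \<eta> where \<xi>\<eta>: "0 < \<xi>" "\<xi> < h" "0 < \<eta>" "\<eta> < h" and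
    "(f (u + h *\<^sub>R v + h *\<^sub>R w) - f (u + h *\<^sub>R v) - f (u + h *\<^sub>R w) + f u) \<bullet> b
      = h * h * (dir_deriv (dir_deriv f v) w (u + \<xi> *\<^sub>R v + \<eta> *\<^sub>R w) \<bullet> b)"
    using second_difference_mean_value[OF f fv h square] by blast
  moreover obtain \<xi>' \<eta>' where \<xi>\<eta>': "0 < \<xi>'" "\<xi>' < h" "0 < \<eta>'" "\<eta>' < h" and
    "(f (u + h *\<^sub>R w + h *\<^sub>R v) - f (u + h *\<^sub>R w) - f (u + h *\<^sub>R v) + f u) \<bullet> b
      = h * h * (dir_deriv (dir_deriv f w) v (u + \<xi>' *\<^sub>R w + \<eta>' *\<^sub>R v) \<bullet> b)"
  proof (rule second_difference_mean_value[OF f fw h])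
    show "u + s *\<^sub>R w + t *\<^sub>R v \<in> ball u r" if "0 \<le> s" "s \<le> h" "0 \<le> t" "t \<le> h" for s t
      using square[of t s] that by (simp add: add.commute add.left_commute)
  qed
  ultimately have "dir_deriv (dir_deriv f v) w (u + \<xi> *\<^sub>R v + \<eta> *\<^sub>R w) \<bullet> b
      = dir_deriv (dir_deriv f w) v (u + \<eta>' *\<^sub>R v + \<xi>' *\<^sub>R w) \<bullet> b"
    using h by (simp add: algebra_simps)
  moreover have "u + \<xi> *\<^sub>R v + \<eta> *\<^sub>R w \<in> ball u r" "u + \<eta>' *\<^sub>R v + \<xi>' *\<^sub>R w \<in> ball u r"
    using square \<xi>\<eta> \<xi>\<eta>' by simp_all
  ultimately show ?thesis
    using that by blast
qed

lemma dir_deriv_commute: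
  fixes f :: "'a::real_normed_vector \<Rightarrow> 'b::real_inner"
  assumes U: "open U" "u \<in> U"
    and f: "f differentiable_on U"
    and fv: "dir_deriv f v differentiable_on U" and fw: "dir_deriv f w differentiable_on U"
    and cont_vw: "continuous_on U (dir_deriv (dir_deriv f v) w)"
    and cont_wv: "continuous_on U (dir_deriv (dir_deriv f w) v)"
  shows "dir_deriv (dir_deriv f v) w u = dir_deriv (dir_deriv f w) v u"
proof -
  define c1 where "c1 = dir_deriv (dir_deriv f v) w"
  define c2 where "c2 = dir_deriv (dir_deriv f w) v"
  define D where "D = c1 u - c2 u"
  have diff_at: "g differentiable (at q)" if "g differentiable_on U" "q \<in> ball u r" "ball u r \<subseteq> U"
    for g q r
    using that U(1) differentiable_on_eq_differentiable_at by blast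
  have bound: "D \<bullet> D \<le> 2 * \<epsilon> * norm D" if \<epsilon>: "\<epsilon> > 0" for \<epsilon>
  proof -
    obtain d1 where d1: "d1 > 0" "\<And>q. q \<in> U \<Longrightarrow> dist q u < d1 \<Longrightarrow> dist (c1 q) (c1 u) < \<epsilon>"
      using cont_vw U(2) \<epsilon> unfolding continuous_on_iff c1_def by blast
    obtain d2 where d2: "d2 > 0" "\<And>q. q \<in> U \<Longrightarrow> dist q u < d2 \<Longrightarrow> dist (c2 q) (c2 u) < \<epsilon>"
      using cont_wv U(2) \<epsilon> unfolding continuous_on_iff c2_def by blast
    obtain d0 where d0: "d0 > 0" "ball u d0 \<subseteq> U"
      using U open_contains_ball by blast
    define r where "r = min d0 (min d1 d2)"
    have r: "r > 0" "ball u r \<subseteq> U"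
      using d0 d1 d2 by (auto simp: r_def)
    obtain q1 q2 where q: "q1 \<in> ball u r" "q2 \<in> ball u r" "c1 q1 \<bullet> D = c2 q2 \<bullet> D"
      using mixed_second_dir_derivs_meet_near[OF r(1) diff_at[OF f _ r(2)] diff_at[OF fv _ r(2)]
          diff_at[OF fw _ r(2)]]
      unfolding c1_def c2_def by blast
    have "q1 \<in> U" "q2 \<in> U" "dist q1 u < d1" "dist q2 u < d2"
      using q r(2) by (auto simp: r_def dist_commute)
    then have close: "norm (c1 q1 - c1 u) < \<epsilon>" "norm (c2 q2 - c2 u) < \<epsilon>"
      using d1(2)[of q1] d2(2)[of q2] by (auto simp: dist_norm)
    have "D \<bullet> D = (c2 q2 - c2 u) \<bullet> D - (c1 q1 - c1 u) \<bullet> D"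
      using q(3) by (simp add: D_def inner_diff_left)
    also have "\<dots> \<le> norm (c2 q2 - c2 u) * norm D + norm (c1 q1 - c1 u) * norm D"
      using Cauchy_Schwarz_ineq2[of "c2 q2 - c2 u" D] Cauchy_Schwarz_ineq2[of "c1 q1 - c1 u" D]
      by linarith
    also have "\<dots> \<le> 2 * \<epsilon> * norm D"
      using close by (simp add: mult_right_mono flip: distrib_right)
    finally show ?thesis .
  qed
  have "norm D = 0"
  proof (rule ccontr)
    assume "norm D \<noteq> 0"
    with bound[of "norm D / 4"] show False
      by (simp add: power2_norm_eq_inner[symmetric] power2_eq_square mult_le_cancel_right_pos)
  qed
  then show ?thesis
    by (simp add: D_def c1_def c2_def)
qed

lemma smooth_on_differentiable_on:
  assumes "smooth_on U f"
  shows "f differentiable_on U" "dir_deriv f v differentiable_on U"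
    "dir_deriv (dir_deriv f v) v' differentiable_on U"
  using assms unfolding smooth_on_def by (metis iter_dir_deriv.simps)+

lemma smooth_on_has_derivative:
  assumes "smooth_on U f" "open U" "u \<in> U"
  shows "(f has_derivative frechet_derivative f (at u)) (at u)"
  using smooth_on_differentiable_on(1)[OF assms(1)] assms(2,3)
  by (meson differentiable_on_eq_differentiable_at frechet_derivative_works)

lemma smooth_on_dir_deriv_has_derivative:
  assumes "smooth_on U f" "open U" "u \<in> U"
  shows "(dir_deriv f v has_derivative frechet_derivative (dir_deriv f v) (at u)) (at u)"
  using smooth_on_differentiable_on(2)[OF assms(1)] assms(2,3)
  by (meson differentiable_on_eq_differentiable_at frechet_derivative_works)

lemma smooth_on_dir_deriv_commute:
  fixes f :: "'a::real_normed_vector \<Rightarrow> 'b::real_inner"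
  assumes "smooth_on U f" "open U" "u \<in> U"
  shows "dir_deriv (dir_deriv f v) w u = dir_deriv (dir_deriv f w) v u"
  by (rule dir_deriv_commute[OF assms(2,3)])
     (intro differentiable_imp_continuous_on smooth_on_differentiable_on[OF assms(1)])+

lemma gbar_eq_0_iff:
  assumes "norm p < 1"
  shows "gbar p X Y = 0 \<longleftrightarrow> X \<bullet> Y = 0"
proof -
  have "(norm p)\<^sup>2 < 1"
    using assms by (simp add: power_less_one_iff)
  then show ?thesis
    by (simp add: gbar_def)
qed

lemma gbar_on_sphere:
  assumes "norm p = r"
  shows "gbar p X Y = (2 / (1 - r\<^sup>2))\<^sup>2 * (X \<bullet> Y)"
  using assms by (simp add: gbar_def power_divide)

lemma has_derivative_gbar:
  fixes x Y Z :: "'a::real_normed_vector \<Rightarrow> 'b::euclidean_space"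
  assumes x: "(x has_derivative x') (at u within S)"
    and Y: "(Y has_derivative Y') (at u within S)" and Z: "(Z has_derivative Z') (at u within S)"
    and off_sphere: "norm (x u) \<noteq> 1"
  shows "((\<lambda>v. gbar (x v) (Y v) (Z v)) has_derivative
     (\<lambda>h. 16 * (x u \<bullet> x' h) / (1 - (norm (x u))\<^sup>2) ^ 3 * (Y u \<bullet> Z u)
          + gbar (x u) (Y' h) (Z u) + gbar (x u) (Y u) (Z' h))) (at u within S)"
proof -
  define d where "d = 1 - x u \<bullet> x u"
  have d: "d \<noteq> 0" "x u \<bullet> x u \<noteq> 1"
    using off_sphere by (auto simp: d_def norm_eq_sqrt_inner)
  have weight: "((\<lambda>v. 4 / (1 - x v \<bullet> x v)\<^sup>2) has_derivative
      (\<lambda>h. 16 * (x u \<bullet> x' h) / d ^ 3)) (at u within S)"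
    by (rule derivative_eq_intros x refl | simp add: d)+
       (use d in \<open>auto simp flip: d_def simp: fun_eq_iff field_simps eval_nat_numeral inner_commute\<close>)
  show ?thesis
    unfolding gbar_def power2_norm_eq_inner d_def[symmetric]
    by (rule has_derivative_eq_rhs[OF has_derivative_mult[OF weight has_derivative_inner[OF Y Z]]])
       (auto simp: fun_eq_iff algebra_simps add_divide_distrib inner_commute d_def)
qed

lemma has_derivative_V_fun:
  fixes p :: "'b::euclidean_space"
  assumes "norm p \<noteq> 1"
  shows "(V_fun a has_derivative
     (\<lambda>P. 2 * (P \<bullet> a) / (1 - (norm p)\<^sup>2) + 4 * (p \<bullet> a) * (p \<bullet> P) / (1 - (norm p)\<^sup>2)\<^sup>2)) (at p)"
proof -
  have nz: "1 - p \<bullet> p \<noteq> 0"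
    using assms by (metis norm_eq_sqrt_inner real_sqrt_one right_minus_eq)
  show ?thesis
    unfolding V_fun_def[abs_def] power2_norm_eq_inner
    by (rule derivative_eq_intros refl | simp add: nz)+
       (use nz in \<open>auto simp: fun_eq_iff field_simps power2_eq_square inner_commute\<close>)
qed

lemma has_derivative_X_fld:
  "(X_fld R a has_derivative
     (\<lambda>P. (2 / (1 - (tanh (R/2))\<^sup>2)) *\<^sub>R ((P \<bullet> a) *\<^sub>R p + (p \<bullet> a) *\<^sub>R P - (p \<bullet> P) *\<^sub>R a))) (at p)"
  unfolding X_fld_def[abs_def] power2_norm_eq_inner
  by (rule derivative_eq_intros refl)+ (auto simp: fun_eq_iff algebra_simps inner_commute)

lemma has_derivative_Y_fld:
  "(Y_fld a has_derivative (\<lambda>P. (p \<bullet> P) *\<^sub>R a - (P \<bullet> a) *\<^sub>R p - (p \<bullet> a) *\<^sub>R P)) (at p)"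
  unfolding Y_fld_def[abs_def] power2_norm_eq_inner
  by (rule derivative_eq_intros refl)+ (auto simp: fun_eq_iff algebra_simps inner_commute)

lemma tanh_half_identities:
  fixes R :: real
  defines "r \<equiv> tanh (R/2)"
  defines "L \<equiv> 2 / (1 - r\<^sup>2)"
  shows "L * (1 - r\<^sup>2) = 2" "sinh R = L * r" "cosh R = L * (1 + r\<^sup>2) / 2"
proof -
  define y where "y = R/2"
  have R: "R = 2 * y" by (simp add: y_def)
  have cosh_pos: "cosh y > 0" by simp
  have "1 + (sinh y)\<^sup>2 > 0"
    by (simp add: add_pos_nonneg)
  then have "1 - r\<^sup>2 = 1 / (cosh y)\<^sup>2"
    using cosh_square_eq[of y]
    by (simp add: r_def y_def[symmetric] tanh_def power_divide field_simps)
  then have L: "L = 2 * (cosh y)\<^sup>2"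
    by (simp add: L_def)
  show "L * (1 - r\<^sup>2) = 2"
    using \<open>1 - r\<^sup>2 = 1 / (cosh y)\<^sup>2\<close> cosh_pos by (simp add: L)
  show "sinh R = L * r"
    using cosh_pos unfolding R sinh_double
    by (simp add: L r_def y_def[symmetric] tanh_def power2_eq_square)
  show "cosh R = L * (1 + r\<^sup>2) / 2"
    using cosh_pos unfolding R cosh_double
    by (simp add: L r_def y_def[symmetric] tanh_def field_simps)
qed

lemma range_eq_hyperplane:
  fixes f :: "'a::euclidean_space \<Rightarrow> 'b::euclidean_space"
  assumes "linear f" "inj f" "DIM('b) = DIM('a) + 1"
    and "n \<noteq> 0" "\<And>v. n \<bullet> f v = 0"
  shows "range f = {y. n \<bullet> y = 0}"
proof (rule subspace_dim_equal)
  show "subspace (range f)"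
    using assms(1) by (metis linear_subspace_image subspace_UNIV)
  show "subspace {y. n \<bullet> y = 0}"
    by (rule subspace_hyperplane)
  show "range f \<subseteq> {y. n \<bullet> y = 0}"
    using assms(5) by auto
  have "dim (range f) = DIM('a)"
    using dim_image_eq[of f UNIV] assms(1,2) by (simp add: inj_on_def inj_def)
  then show "dim {y. n \<bullet> y = 0} \<le> dim (range f)"
    using dim_hyperplane[OF assms(4)] assms(3) by simp
qed

lemma in_span_of_orthogonal_pair:
  fixes v m n :: "'b::real_inner"
  assumes "m \<bullet> n = 0" "m \<noteq> 0" "n \<noteq> 0"
    and orth: "\<And>y. y \<bullet> m = 0 \<Longrightarrow> y \<bullet> n = 0 \<Longrightarrow> v \<bullet> y = 0"
  shows "v = ((v \<bullet> m) / (m \<bullet> m)) *\<^sub>R m + ((v \<bullet> n) / (n \<bullet> n)) *\<^sub>R n"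
proof -
  define y where "y = v - ((v \<bullet> m) / (m \<bullet> m)) *\<^sub>R m - ((v \<bullet> n) / (n \<bullet> n)) *\<^sub>R n"
  have "y \<bullet> m = 0" "y \<bullet> n = 0"
    using assms(1-3) by (auto simp: y_def inner_diff_left inner_commute[of n m])
  then have "v \<bullet> y = 0"
    by (rule orth)
  then have "y \<bullet> y = 0"
    using \<open>y \<bullet> m = 0\<close> \<open>y \<bullet> n = 0\<close> by (simp add: y_def inner_diff_left inner_commute)
  then have "y = 0"
    by simp
  then show ?thesis
    unfolding y_def by (simp add: algebra_simps)
qed

lemma image_hyperplane_onto_orthogonal:
  fixes f :: "'a::real_inner \<Rightarrow> 'b::real_inner"
  assumes lin: "linear f" and range: "range f = {y. n \<bullet> y = 0}"
    and w: "f w = m" "w \<bullet> e \<noteq> 0" and m: "m \<noteq> 0" "\<And>z. z \<bullet> e = 0 \<Longrightarrow> m \<bullet> f z = 0"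
    and y: "n \<bullet> y = 0" "m \<bullet> y = 0"
  obtains z where "z \<bullet> e = 0" "f z = y"
proof -
  obtain z' where z': "y = f z'"
    using y(1) range by blast
  define k where "k = (z' \<bullet> e) / (w \<bullet> e)"
  define z where "z = z' - k *\<^sub>R w"
  have z: "z \<bullet> e = 0"
    using w(2) by (simp add: z_def k_def inner_diff_left)
  have fz: "f z = y - k *\<^sub>R m"
    using lin w(1) z' by (simp add: z_def linear_diff linear_scale)
  have "k * (m \<bullet> m) = 0"
    using m(2)[OF z] y(2) by (simp add: fz inner_diff_right)
  then have "k = 0"
    using m(1) by simp
  then show ?thesis
    using that z fz by simp
qed

locale capillary_immersion =
  fixes R \<theta> :: real and U :: "'a::euclidean_space set" and e :: 'a
    and x \<nu> \<mu> \<nu>bar :: "'a \<Rightarrow> 'b::euclidean_space"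
  assumes dim: "DIM('b) = DIM('a) + 1"
    and R: "R > 0" and \<theta>: "0 < \<theta>" "\<theta> < pi"
    and U: "open U"
    and x_smooth: "smooth_on U x" and \<nu>_smooth: "smooth_on U \<nu>"
    and immersion: "\<And>u. u \<in> U \<Longrightarrow> u \<bullet> e \<ge> 0 \<Longrightarrow> inj (frechet_derivative x (at u))"
    and in_ball: "\<And>u. u \<in> U \<Longrightarrow> u \<bullet> e \<ge> 0 \<Longrightarrow> norm (x u) \<le> tanh (R/2)"
    and on_sphere: "\<And>u. u \<in> U \<Longrightarrow> u \<bullet> e = 0 \<Longrightarrow> norm (x u) = tanh (R/2)"
    and normal: "\<And>u. u \<in> U \<Longrightarrow> u \<bullet> e \<ge> 0 \<Longrightarrow> gbar (x u) (\<nu> u) (\<nu> u) = 1"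
      "\<And>u v. u \<in> U \<Longrightarrow> u \<bullet> e \<ge> 0 \<Longrightarrow> gbar (x u) (\<nu> u) (frechet_derivative x (at u) v) = 0"
    and conormal: "\<And>u. u \<in> U \<Longrightarrow> u \<bullet> e = 0 \<Longrightarrow>
        \<exists>w. w \<bullet> e < 0 \<and> \<mu> u = frechet_derivative x (at u) w"
      "\<And>u. u \<in> U \<Longrightarrow> u \<bullet> e = 0 \<Longrightarrow> gbar (x u) (\<mu> u) (\<mu> u) = 1"
      "\<And>u v. u \<in> U \<Longrightarrow> u \<bullet> e = 0 \<Longrightarrow> v \<bullet> e = 0 \<Longrightarrow>
        gbar (x u) (\<mu> u) (frechet_derivative x (at u) v) = 0"
    and nubar: "\<And>u. u \<in> U \<Longrightarrow> u \<bullet> e = 0 \<Longrightarrow> gbar (x u) (\<nu>bar u) ((1 / sinh R) *\<^sub>R x u) = 0"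
    and contact_angle: "\<And>u. u \<in> U \<Longrightarrow> u \<bullet> e = 0 \<Longrightarrow>
        \<mu> u = sin \<theta> *\<^sub>R (1 / sinh R) *\<^sub>R x u + cos \<theta> *\<^sub>R \<nu>bar u"
      "\<And>u. u \<in> U \<Longrightarrow> u \<bullet> e = 0 \<Longrightarrow>
        \<nu> u = (- cos \<theta>) *\<^sub>R (1 / sinh R) *\<^sub>R x u + sin \<theta> *\<^sub>R \<nu>bar u"
begin

definition r :: real where "r = tanh (R/2)"

definition L :: real where "L = 2 / (1 - r\<^sup>2)"

lemma radius_bounds: "0 < r" "r < 1" "L > 0"
  using R tanh_real_lt_1[of "R/2"] by (auto simp: r_def L_def power_less_one_iff)

lemma hyperbolic_radius: "L * (1 - r\<^sup>2) = 2" "sinh R = L * r" "cosh R = L * (1 + r\<^sup>2) / 2"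
  unfolding L_def r_def by (rule tanh_half_identities)+

lemma one_minus_r_squared: "1 - r\<^sup>2 = 2 / L"
  using hyperbolic_radius(1) radius_bounds(3) by (simp add: field_simps)

lemma inside_unit_ball: "u \<in> U \<Longrightarrow> u \<bullet> e \<ge> 0 \<Longrightarrow> norm (x u) < 1"
  using in_ball radius_bounds(2) by (fastforce simp: r_def)

lemma gbar_on_boundary: "u \<in> U \<Longrightarrow> u \<bullet> e = 0 \<Longrightarrow> gbar (x u) X Y = L\<^sup>2 * (X \<bullet> Y)"
  using on_sphere gbar_on_sphere unfolding L_def r_def by blast

lemma normal_orthogonal: "u \<in> U \<Longrightarrow> u \<bullet> e \<ge> 0 \<Longrightarrow> \<nu> u \<bullet> frechet_derivative x (at u) v = 0"
  using normal(2) inside_unit_ball gbar_eq_0_iff by blast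

lemma normal_times_position_on_boundary:
  "u \<in> U \<Longrightarrow> u \<bullet> e = 0 \<Longrightarrow> \<nu> u \<bullet> x u = - cos \<theta> * r / L"
proof -
  assume u: "u \<in> U" "u \<bullet> e = 0"
  have "\<nu>bar u \<bullet> x u = 0"
    using nubar[OF u] gbar_on_boundary[OF u] radius_bounds R by simp
  moreover have "x u \<bullet> x u = r\<^sup>2"
    using on_sphere[OF u] by (simp add: r_def flip: power2_norm_eq_inner)
  ultimately show ?thesis
    using radius_bounds
    by (simp add: contact_angle(2)[OF u] hyperbolic_radius inner_add_left inner_diff_left
        power2_eq_square)
qed

end

locale capillary_boundary_point = capillary_immersion +
  fixes u w :: "'a::euclidean_space"
  assumes u: "u \<in> U" "u \<bullet> e = 0"
    and w: "frechet_derivative x (at u) w = \<mu> u"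
begin

abbreviation p where "p \<equiv> x u"
abbreviation n where "n \<equiv> \<nu> u"
abbreviation m where "m \<equiv> \<mu> u"
abbreviation Dx where "Dx \<equiv> frechet_derivative x (at u)"
abbreviation D\<nu> where "D\<nu> \<equiv> frechet_derivative \<nu> (at u)"

lemma has_derivative_x: "(x has_derivative Dx) (at u)"
  using smooth_on_has_derivative[OF x_smooth U u(1)] .

lemma has_derivative_\<nu>: "(\<nu> has_derivative D\<nu>) (at u)"
  using smooth_on_has_derivative[OF \<nu>_smooth U u(1)] .

lemma u_in_halfspace: "u \<bullet> e \<ge> 0"
  using u by simp

lemma norm_position: "norm p = r"
  using on_sphere[OF u] by (simp add: r_def)

lemma frame_inner:
  "L\<^sup>2 * (m \<bullet> m) = 1" "L\<^sup>2 * (n \<bullet> n) = 1" "m \<bullet> n = 0"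
  using conormal(2)[OF u] normal(1)[OF u(1) u_in_halfspace] gbar_on_boundary[OF u]
    normal_orthogonal[OF u(1) u_in_halfspace, of w]
  by (auto simp: w inner_commute)

lemma position_in_frame: "p = sinh R *\<^sub>R (sin \<theta> *\<^sub>R m - cos \<theta> *\<^sub>R n)"
proof -
  have "sin \<theta> *\<^sub>R m - cos \<theta> *\<^sub>R n
      = (sin \<theta> * sin \<theta> / sinh R) *\<^sub>R p + (cos \<theta> * cos \<theta> / sinh R) *\<^sub>R p"
    by (simp add: contact_angle[OF u] algebra_simps)
  also have "\<dots> = (((sin \<theta>)\<^sup>2 + (cos \<theta>)\<^sup>2) / sinh R) *\<^sub>R p"
    by (simp add: power2_eq_square add_divide_distrib scaleR_add_left)
  also have "\<dots> = (1 / sinh R) *\<^sub>R p"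
    by simp
  finally show ?thesis
    using R by simp
qed

lemma position_inner: "p \<bullet> m = r * sin \<theta> / L" "p \<bullet> n = - r * cos \<theta> / L"
proof -
  have "p \<bullet> m = sinh R * sin \<theta> * (m \<bullet> m)" "p \<bullet> n = - sinh R * cos \<theta> * (n \<bullet> n)"
    by (subst position_in_frame; simp add: inner_diff_left frame_inner(3) inner_commute[of n m])+
  then show "p \<bullet> m = r * sin \<theta> / L" "p \<bullet> n = - r * cos \<theta> / L"
    using frame_inner(1,2) radius_bounds(3)
    by (simp_all add: hyperbolic_radius(2) field_simps power2_eq_square)
qed

lemma normal_derivative_normal: "n \<bullet> D\<nu> y = - (p \<bullet> Dx y) / L"
proof -
  have "((\<lambda>v. gbar (x v) (\<nu> v) (\<nu> v)) has_derivative
      (\<lambda>h. 16 * (p \<bullet> Dx h) / (1 - (norm p)\<^sup>2) ^ 3 * (n \<bullet> n)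
        + gbar p (D\<nu> h) n + gbar p n (D\<nu> h))) (at u)"
    using norm_position radius_bounds
    by (intro has_derivative_gbar has_derivative_x has_derivative_\<nu>) auto
  then have "16 * (p \<bullet> Dx y) / (1 - (norm p)\<^sup>2) ^ 3 * (n \<bullet> n)
      + gbar p (D\<nu> y) n + gbar p n (D\<nu> y) = 0"
    by (rule has_derivative_zero_if_constant_on_halfspace[OF _ U u]) (use u normal(1) in auto)
  moreover have "n \<bullet> n = 1 / L\<^sup>2"
    using frame_inner(2) radius_bounds(3) by (simp add: field_simps)
  ultimately have "16 * (p \<bullet> Dx y) / (2 / L) ^ 3 * (1 / L\<^sup>2) + 2 * L\<^sup>2 * (n \<bullet> D\<nu> y) = 0"
    by (simp add: norm_position one_minus_r_squared gbar_on_boundary[OF u] inner_commute)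
  then have "2 * L * (p \<bullet> Dx y + L * (n \<bullet> D\<nu> y)) = 0"
    using radius_bounds(3) by (simp add: field_simps power2_eq_square power3_eq_cube)
  then have "p \<bullet> Dx y + L * (n \<bullet> D\<nu> y) = 0"
    using radius_bounds(3) by simp
  then show ?thesis
    using radius_bounds(3) by (simp add: field_simps)
qed

lemma position_derivative_tangential: "z \<bullet> e = 0 \<Longrightarrow> p \<bullet> Dx z = 0"
proof -
  assume z: "z \<bullet> e = 0"
  have "((\<lambda>v. x v \<bullet> x v) has_derivative (\<lambda>h. p \<bullet> Dx h + Dx h \<bullet> p)) (at u)"
    by (rule has_derivative_inner[OF has_derivative_x has_derivative_x])
  then have "p \<bullet> Dx z + Dx z \<bullet> p = 0"
    by (rule has_derivative_zero_if_constant_on_hyperplane[OF _ U u _ z])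
       (simp add: on_sphere u flip: power2_norm_eq_inner)
  then show ?thesis
    by (simp add: inner_commute)
qed

lemma normal_derivative_tangential: "z \<bullet> e = 0 \<Longrightarrow> D\<nu> z \<bullet> m = 0"
proof -
  assume z: "z \<bullet> e = 0"
  have "((\<lambda>v. \<nu> v \<bullet> x v) has_derivative (\<lambda>h. n \<bullet> Dx h + D\<nu> h \<bullet> p)) (at u)"
    by (rule has_derivative_inner[OF has_derivative_\<nu> has_derivative_x])
  then have "n \<bullet> Dx z + D\<nu> z \<bullet> p = 0"
    by (rule has_derivative_zero_if_constant_on_hyperplane[OF _ U u _ z])
       (simp add: normal_times_position_on_boundary u)
  then have "D\<nu> z \<bullet> p = 0"
    using normal_orthogonal[OF u(1) u_in_halfspace] by simp
  moreover have "D\<nu> z \<bullet> n = 0"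
    using normal_derivative_normal[of z] position_derivative_tangential[OF z]
    by (simp add: inner_commute)
  ultimately have "sinh R * sin \<theta> * (D\<nu> z \<bullet> m) = 0"
    by (subst (asm) position_in_frame) (simp add: inner_diff_right)
  moreover have "sinh R * sin \<theta> > 0"
    using R \<theta> by (simp add: sin_gt_zero)
  ultimately show ?thesis
    by auto
qed

lemma conormal_principal_direction: "z \<bullet> e = 0 \<Longrightarrow> Dx z \<bullet> D\<nu> w = 0"
proof -
  assume z: "z \<bullet> e = 0"
  have tangent_normal: "frechet_derivative x (at v) y \<bullet> \<nu> v = 0" if "v \<in> U" "v \<bullet> e \<ge> 0" for v y
    using normal_orthogonal[OF that] by (simp add: inner_commute)
  have second_derivative:
    "Dx y \<bullet> D\<nu> y' + frechet_derivative (dir_deriv x y) (at u) y' \<bullet> n = 0" for y y'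
  proof -
    have "((\<lambda>v. dir_deriv x y v \<bullet> \<nu> v) has_derivative
        (\<lambda>h. Dx y \<bullet> D\<nu> h + frechet_derivative (dir_deriv x y) (at u) h \<bullet> n)) (at u)"
      using has_derivative_inner[OF smooth_on_dir_deriv_has_derivative[OF x_smooth U u(1)]
          has_derivative_\<nu>]
      by (simp add: dir_deriv_def)
    then show ?thesis
      by (rule has_derivative_zero_if_constant_on_halfspace[OF _ U u])
         (simp add: tangent_normal[OF u(1) u_in_halfspace] tangent_normal dir_deriv_def)
  qed
  have "frechet_derivative (dir_deriv x z) (at u) w = frechet_derivative (dir_deriv x w) (at u) z"
    using smooth_on_dir_deriv_commute[OF x_smooth U u(1), of z w] by (simp add: dir_deriv_def)
  then show ?thesis
    using second_derivative[of z w] second_derivative[of w z] normal_derivative_tangential[OF z]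
    by (simp add: w inner_commute)
qed

lemma conormal_transversal: "w \<bullet> e \<noteq> 0"
proof -
  obtain w' where "w' \<bullet> e < 0" "m = Dx w'"
    using conormal(1)[OF u] by blast
  moreover have "inj Dx"
    using immersion[OF u(1) u_in_halfspace] .
  ultimately show ?thesis
    using w by (metis injD less_irrefl)
qed

lemma normal_derivative_in_frame:
  "D\<nu> w = (L\<^sup>2 * (D\<nu> w \<bullet> m)) *\<^sub>R m + (L\<^sup>2 * (D\<nu> w \<bullet> n)) *\<^sub>R n"
proof -
  have frame: "m \<noteq> 0" "n \<noteq> 0" "m \<bullet> m = 1 / L\<^sup>2" "n \<bullet> n = 1 / L\<^sup>2"
    using frame_inner radius_bounds(3) by (auto simp: field_simps)
  have lin: "linear Dx"
    using has_derivative_x by (rule has_derivative_linear)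
  have range: "range Dx = {y. n \<bullet> y = 0}"
    using lin immersion[OF u(1) u_in_halfspace] dim frame(2)
      normal_orthogonal[OF u(1) u_in_halfspace] by (rule range_eq_hyperplane)
  have m_orth: "m \<bullet> Dx z = 0" if "z \<bullet> e = 0" for z
    using conormal(3)[OF u that] radius_bounds(3) by (simp add: gbar_on_boundary[OF u])
  have "D\<nu> w \<bullet> y = 0" if "y \<bullet> m = 0" "y \<bullet> n = 0" for y
  proof -
    have "n \<bullet> y = 0" "m \<bullet> y = 0"
      using that by (simp_all add: inner_commute)
    then obtain z where "z \<bullet> e = 0" "Dx z = y"
      using image_hyperplane_onto_orthogonal[OF lin range w conormal_transversal frame(1) m_orth]
      by blast
    then show ?thesis
      using conormal_principal_direction by (auto simp: inner_commute)
  qed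
  then have "D\<nu> w = ((D\<nu> w \<bullet> m) / (m \<bullet> m)) *\<^sub>R m + ((D\<nu> w \<bullet> n) / (n \<bullet> n)) *\<^sub>R n"
    by (rule in_span_of_orthogonal_pair[OF frame_inner(3) frame(1,2)])
  then show ?thesis
    using frame(3,4) by (simp add: mult.commute)
qed

lemma second_fundamental_form_conormal:
  "gbar p (cov_deriv p m n (D\<nu> w)) m = L\<^sup>2 * (D\<nu> w \<bullet> m) - r * cos \<theta>"
proof -
  have "grad_phi p = L *\<^sub>R p"
    using on_sphere[OF u] by (simp add: grad_phi_def L_def r_def)
  then have "cov_deriv p m n (D\<nu> w) \<bullet> m = D\<nu> w \<bullet> m + L * (n \<bullet> p) * (m \<bullet> m)"
    using frame_inner(3)
    by (simp add: cov_deriv_def inner_add_left inner_diff_left inner_commute[of n m])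
  moreover have "m \<bullet> m = 1 / L\<^sup>2"
    using frame_inner(1) radius_bounds(3) by (simp add: field_simps)
  ultimately show ?thesis
    using position_inner(2) radius_bounds(3)
    by (simp add: gbar_on_boundary[OF u] inner_commute field_simps)
qed

lemma inner_position_expansion: "p \<bullet> v = L * r * (sin \<theta> * (v \<bullet> m) - cos \<theta> * (v \<bullet> n))"
  by (subst position_in_frame)
     (simp add: hyperbolic_radius inner_diff_left inner_diff_right inner_commute)

lemma normal_derivative_normal_value: "D\<nu> w \<bullet> n = - r * sin \<theta> / L\<^sup>2"
  using normal_derivative_normal[of w] position_inner(1) radius_bounds(3)
  by (simp add: w inner_commute power2_eq_square)

lemma inner_normal_derivative_expansion:
  "v \<bullet> D\<nu> w = L\<^sup>2 * (D\<nu> w \<bullet> m) * (v \<bullet> m) - r * sin \<theta> * (v \<bullet> n)"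
  using radius_bounds(3)
  by (subst normal_derivative_in_frame)
     (simp add: normal_derivative_normal_value inner_add_right inner_diff_right)

definition q :: real where
  "q = cosh R / sinh R / sin \<theta> + cot \<theta> * gbar p (cov_deriv p m n (D\<nu> w)) m"

lemma q_eq: "q = (1 + r\<^sup>2) / (2 * r * sin \<theta>) + cos \<theta> / sin \<theta> * (L\<^sup>2 * (D\<nu> w \<bullet> m) - r * cos \<theta>)"
  using radius_bounds
  by (simp add: q_def second_fundamental_form_conormal hyperbolic_radius(2,3) cot_def)

lemma X_fld_on_boundary:
  "X_fld R a p \<bullet> n = - L * r\<^sup>2 * sin \<theta> * (cos \<theta> * (a \<bullet> m) + sin \<theta> * (a \<bullet> n))"
  "X_fld R a p \<bullet> D\<nu> w = L * r\<^sup>2 * (cos \<theta> * (a \<bullet> m) + sin \<theta> * (a \<bullet> n))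
     * (r * (sin \<theta>)\<^sup>2 - L\<^sup>2 * cos \<theta> * (D\<nu> w \<bullet> m))"
proof -
  have X: "X_fld R a p \<bullet> v = L * ((p \<bullet> a) * (p \<bullet> v) - r\<^sup>2 * (a \<bullet> v))" for v
    by (simp add: X_fld_def norm_position L_def r_def inner_diff_left)
  have L: "L \<noteq> 0"
    using radius_bounds by simp
  show "X_fld R a p \<bullet> n = - L * r\<^sup>2 * sin \<theta> * (cos \<theta> * (a \<bullet> m) + sin \<theta> * (a \<bullet> n))"
    unfolding X inner_position_expansion[of a] position_inner(2)
    using L by (simp add: field_simps) (use sin_cos_squared_add[of \<theta>] in algebra)
  show "X_fld R a p \<bullet> D\<nu> w = L * r\<^sup>2 * (cos \<theta> * (a \<bullet> m) + sin \<theta> * (a \<bullet> n))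
     * (r * (sin \<theta>)\<^sup>2 - L\<^sup>2 * cos \<theta> * (D\<nu> w \<bullet> m))"
    unfolding X inner_position_expansion[of a] inner_normal_derivative_expansion[of a]
      inner_normal_derivative_expansion[of p] position_inner(1,2)
    using L by (simp add: field_simps) (use sin_cos_squared_add[of \<theta>] in algebra)
qed

lemma derivative_X_normal:
  "frechet_derivative (\<lambda>v. gbar (x v) (X_fld R a (x v)) (\<nu> v)) (at u) w = q * gbar p (X_fld R a p) n"
  (is "frechet_derivative ?F (at u) w = _")
proof -
  have "(?F has_derivative
    (\<lambda>h. 16 * (p \<bullet> Dx h) / (1 - (norm p)\<^sup>2) ^ 3 * (X_fld R a p \<bullet> n)
      + gbar p (L *\<^sub>R ((Dx h \<bullet> a) *\<^sub>R p + (p \<bullet> a) *\<^sub>R Dx h - (p \<bullet> Dx h) *\<^sub>R a)) n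
      + gbar p (X_fld R a p) (D\<nu> h))) (at u)"
    using has_derivative_gbar[OF has_derivative_x
        has_derivative_compose[OF has_derivative_x has_derivative_X_fld] has_derivative_\<nu>]
      norm_position radius_bounds(2)
    by (simp add: L_def r_def)
  then have "frechet_derivative ?F (at u) w
    = 16 * (p \<bullet> m) / (2 / L) ^ 3 * (X_fld R a p \<bullet> n)
      + L\<^sup>2 * (L * ((a \<bullet> m) * (p \<bullet> n) - (p \<bullet> m) * (a \<bullet> n)))
      + L\<^sup>2 * (X_fld R a p \<bullet> D\<nu> w)"
    by (simp add: frechet_derivative_at[symmetric] w norm_position one_minus_r_squared
        frame_inner(3) gbar_on_boundary[OF u] inner_add_left inner_diff_left inner_commute[of m a])
  moreover have "gbar p (X_fld R a p) n = L\<^sup>2 * (X_fld R a p \<bullet> n)"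
    by (simp add: gbar_on_boundary[OF u])
  ultimately show ?thesis
    unfolding q_eq X_fld_on_boundary position_inner
    using radius_bounds sin_gt_zero[OF \<theta>]
    by (simp add: field_simps) (use hyperbolic_radius(1) sin_cos_squared_add[of \<theta>] in algebra)
qed

lemma Y_fld_on_boundary:
  "Y_fld a p \<bullet> n = (1 + r\<^sup>2) / 2 * (a \<bullet> n) + r\<^sup>2 * cos \<theta> * (sin \<theta> * (a \<bullet> m) - cos \<theta> * (a \<bullet> n))"
  "Y_fld a p \<bullet> D\<nu> w = (1 + r\<^sup>2) / 2 * (L\<^sup>2 * (D\<nu> w \<bullet> m) * (a \<bullet> m) - r * sin \<theta> * (a \<bullet> n))
     - r\<^sup>2 * sin \<theta> * (sin \<theta> * (a \<bullet> m) - cos \<theta> * (a \<bullet> n)) * (L\<^sup>2 * (D\<nu> w \<bullet> m) + r * cos \<theta>)"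
proof -
  have Y: "Y_fld a p \<bullet> v = (1 + r\<^sup>2) / 2 * (a \<bullet> v) - (p \<bullet> a) * (p \<bullet> v)" for v
    by (simp add: Y_fld_def norm_position inner_diff_left add.commute)
  have L: "L \<noteq> 0"
    using radius_bounds by simp
  show "Y_fld a p \<bullet> n = (1 + r\<^sup>2) / 2 * (a \<bullet> n) + r\<^sup>2 * cos \<theta> * (sin \<theta> * (a \<bullet> m) - cos \<theta> * (a \<bullet> n))"
    unfolding Y inner_position_expansion[of a] position_inner(2)
    using L by (simp add: field_simps power2_eq_square)
  show "Y_fld a p \<bullet> D\<nu> w = (1 + r\<^sup>2) / 2 * (L\<^sup>2 * (D\<nu> w \<bullet> m) * (a \<bullet> m) - r * sin \<theta> * (a \<bullet> n))
     - r\<^sup>2 * sin \<theta> * (sin \<theta> * (a \<bullet> m) - cos \<theta> * (a \<bullet> n)) * (L\<^sup>2 * (D\<nu> w \<bullet> m) + r * cos \<theta>)"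
    unfolding Y inner_position_expansion[of a] inner_normal_derivative_expansion[of a]
      inner_normal_derivative_expansion[of p] position_inner(1,2)
    using L by (simp add: field_simps power2_eq_square)
qed

lemma derivative_V_Y_normal:
  "frechet_derivative (\<lambda>v. V_fun a (x v) + sinh R * cos \<theta> * gbar (x v) (Y_fld a (x v)) (\<nu> v)) (at u) w
    = q * (V_fun a p + sinh R * cos \<theta> * gbar p (Y_fld a p) n)"
  (is "frechet_derivative ?F (at u) w = _")
proof -
  have "(?F has_derivative
    (\<lambda>h. (2 * (Dx h \<bullet> a) / (1 - (norm p)\<^sup>2) + 4 * (p \<bullet> a) * (p \<bullet> Dx h) / (1 - (norm p)\<^sup>2)\<^sup>2)
      + sinh R * cos \<theta> * (16 * (p \<bullet> Dx h) / (1 - (norm p)\<^sup>2) ^ 3 * (Y_fld a p \<bullet> n)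
        + gbar p ((p \<bullet> Dx h) *\<^sub>R a - (Dx h \<bullet> a) *\<^sub>R p - (p \<bullet> a) *\<^sub>R Dx h) n
        + gbar p (Y_fld a p) (D\<nu> h)))) (at u)"
    using norm_position radius_bounds(2)
    by (intro has_derivative_add has_derivative_mult_right has_derivative_gbar
        has_derivative_compose[OF has_derivative_x has_derivative_V_fun]
        has_derivative_compose[OF has_derivative_x has_derivative_Y_fld]
        has_derivative_x has_derivative_\<nu>) auto
  then have "frechet_derivative ?F (at u) w
    = 2 * (a \<bullet> m) / (2 / L) + 4 * (p \<bullet> a) * (p \<bullet> m) / (2 / L)\<^sup>2
      + sinh R * cos \<theta> * (16 * (p \<bullet> m) / (2 / L) ^ 3 * (Y_fld a p \<bullet> n)
        + L\<^sup>2 * ((p \<bullet> m) * (a \<bullet> n) - (a \<bullet> m) * (p \<bullet> n)) + L\<^sup>2 * (Y_fld a p \<bullet> D\<nu> w))"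
    by (simp add: frechet_derivative_at[symmetric] w norm_position one_minus_r_squared
        frame_inner(3) gbar_on_boundary[OF u] inner_diff_left inner_commute[of m a])
  also have "\<dots> = L * (a \<bullet> m) + L\<^sup>2 * r\<^sup>2 * sin \<theta> * (sin \<theta> * (a \<bullet> m) - cos \<theta> * (a \<bullet> n))
      + L * r * cos \<theta> * (2 * L\<^sup>2 * r * sin \<theta> * (Y_fld a p \<bullet> n)
        + L * r * (cos \<theta> * (a \<bullet> m) + sin \<theta> * (a \<bullet> n)) + L\<^sup>2 * (Y_fld a p \<bullet> D\<nu> w))"
    unfolding inner_position_expansion[of a] position_inner hyperbolic_radius(2)
    using radius_bounds by (simp add: field_simps power2_eq_square power3_eq_cube)
  finally have derivative: "frechet_derivative ?F (at u) w
    = L * (a \<bullet> m) + L\<^sup>2 * r\<^sup>2 * sin \<theta> * (sin \<theta> * (a \<bullet> m) - cos \<theta> * (a \<bullet> n))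
      + L * r * cos \<theta> * (2 * L\<^sup>2 * r * sin \<theta> * (Y_fld a p \<bullet> n)
        + L * r * (cos \<theta> * (a \<bullet> m) + sin \<theta> * (a \<bullet> n)) + L\<^sup>2 * (Y_fld a p \<bullet> D\<nu> w))" .
  have V_Y_value: "V_fun a p + sinh R * cos \<theta> * gbar p (Y_fld a p) n
      = L\<^sup>2 * r * (sin \<theta> * (a \<bullet> m) - cos \<theta> * (a \<bullet> n)) + L ^ 3 * r * cos \<theta> * (Y_fld a p \<bullet> n)"
    unfolding V_fun_def norm_position one_minus_r_squared gbar_on_boundary[OF u] inner_commute[of a p]
      inner_position_expansion[of a] hyperbolic_radius(2)
    using radius_bounds by (simp add: field_simps eval_nat_numeral)
  have "L \<noteq> 0" "r \<noteq> 0" "sin \<theta> \<noteq> 0"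
    using radius_bounds sin_gt_zero[OF \<theta>] by auto
  then show ?thesis
    unfolding q_eq derivative V_Y_value Y_fld_on_boundary
    by (simp add: field_simps) (use hyperbolic_radius(1) sin_cos_squared_add[of \<theta>] in algebra)
qed

end

theorem mainTheorem10:
  fixes R \<theta> :: real
    and U :: "'a::euclidean_space set" and e :: 'a
    and x \<nu> \<mu> \<nu>bar :: "'a \<Rightarrow> 'b::euclidean_space"
    and a :: 'b
  defines "M \<equiv> U \<inter> {u. u \<bullet> e \<ge> 0}"
    and "bM \<equiv> U \<inter> {u. u \<bullet> e = 0}"
    and "dx \<equiv> (\<lambda>u. frechet_derivative x (at u))"
    and "Nbar \<equiv> (\<lambda>u. (1 / sinh R) *\<^sub>R x u)"
  assumes dim: "DIM('b) = DIM('a) + 1"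
    and R: "R > 0"
    and \<theta>: "0 < \<theta>" "\<theta> < pi"
    and U: "open U" and e: "e \<noteq> 0"
    and x_smooth: "smooth_on U x"
    and \<nu>_smooth: "smooth_on U \<nu>"
    and immersion: "\<forall>u\<in>M. inj (dx u)"
    and in_ball: "\<forall>u\<in>M. norm (x u) \<le> tanh (R/2)"
    and bdry_in_sphere: "\<forall>u\<in>bM. norm (x u) = tanh (R/2)"
    and normal: "\<forall>u\<in>M. gbar (x u) (\<nu> u) (\<nu> u) = 1 \<and>
                   (\<forall>v. gbar (x u) (\<nu> u) (dx u v) = 0)"
    and conormal: "\<forall>u\<in>bM. (\<exists>w. w \<bullet> e < 0 \<and> \<mu> u = dx u w) \<and>
                   gbar (x u) (\<mu> u) (\<mu> u) = 1 \<and>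
                   (\<forall>v. v \<bullet> e = 0 \<longrightarrow> gbar (x u) (\<mu> u) (dx u v) = 0)"
    and nubar: "\<forall>u\<in>bM. gbar (x u) (\<nu>bar u) (\<nu>bar u) = 1 \<and>
                   gbar (x u) (\<nu>bar u) (Nbar u) = 0 \<and>
                   (\<forall>v. v \<bullet> e = 0 \<longrightarrow> gbar (x u) (\<nu>bar u) (dx u v) = 0)"
    and contact_angle: "\<forall>u\<in>bM.
                   \<mu> u = sin \<theta> *\<^sub>R Nbar u + cos \<theta> *\<^sub>R \<nu>bar u \<and>
                   \<nu> u = (- cos \<theta>) *\<^sub>R Nbar u + sin \<theta> *\<^sub>R \<nu>bar u"
  shows "\<forall>u\<in>bM. \<forall>w. dx u w = \<mu> u \<longrightarrow>
     (let h\<mu>\<mu> = gbar (x u) (cov_deriv (x u) (\<mu> u) (\<nu> u) (frechet_derivative \<nu> (at u) w)) (\<mu> u);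
          q = (cosh R / sinh R) / sin \<theta> + cot \<theta> * h\<mu>\<mu>;
          F1 = (\<lambda>v. V_fun a (x v) + sinh R * cos \<theta> * gbar (x v) (Y_fld a (x v)) (\<nu> v));
          F2 = (\<lambda>v. gbar (x v) (X_fld R a (x v)) (\<nu> v))
      in frechet_derivative F1 (at u) w = q * F1 u \<and>
         frechet_derivative F2 (at u) w = q * F2 u)"
proof -
  interpret capillary_immersion R \<theta> U e x \<nu> \<mu> \<nu>bar
    using dim R \<theta> U x_smooth \<nu>_smooth immersion in_ball bdry_in_sphere normal conormal nubar
      contact_angle
    by unfold_locales (auto simp: M_def bM_def dx_def Nbar_def)
  show ?thesis
  proof (intro ballI allI impI)
    fix u w
    assume "u \<in> bM" "dx u w = \<mu> u"
    then interpret capillary_boundary_point R \<theta> U e x \<nu> \<mu> \<nu>bar u w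
      by unfold_locales (auto simp: bM_def dx_def)
    show "let h\<mu>\<mu> = gbar (x u) (cov_deriv (x u) (\<mu> u) (\<nu> u) (frechet_derivative \<nu> (at u) w)) (\<mu> u);
          q = (cosh R / sinh R) / sin \<theta> + cot \<theta> * h\<mu>\<mu>;
          F1 = (\<lambda>v. V_fun a (x v) + sinh R * cos \<theta> * gbar (x v) (Y_fld a (x v)) (\<nu> v));
          F2 = (\<lambda>v. gbar (x v) (X_fld R a (x v)) (\<nu> v))
      in frechet_derivative F1 (at u) w = q * F1 u \<and>
         frechet_derivative F2 (at u) w = q * F2 u"
      using derivative_V_Y_normal[of a] derivative_X_normal[of a] by (simp add: q_def Let_def)
  qed
qed

end
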